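(* Let $X\subseteq[0,1]$ be a union of intervals of the partition of $[0,1]$ into intervals of length $\delta$. Then $$\|1-\pi_\delta\|_{\mathrm{Var}(X)\to W(X)}\le\frac{\delta^2}8,$$ i.e. for every function $g$ of bounded variation supported in $X$, $\|(1-\pi_\delta)g\|_{W}\le\frac{\delta^2}{8}\mathrm{Var}_X(g)$.
   Context: $\pi_\delta$ is the Ulam projection (average on each interval of the partition of length $\delta$). For a finite union $Y$ of pairwise disjoint intervals $I_j$, $\mathrm{Var}_Y(f)=\sum_j\mathrm{Var}_{I_j}(f)$, where $\mathrm{Var}_I(f)=\sup\sum_i|f(x_{i+1})-f(x_i)|$ over finite increasing sequences in $I$. $W(Y)$ is the space of functions supported in $Y$ with zero average on each $I_j$, normed by $\|f\|_{W}=\|F\|_{L^1}$, $F(x)=\int_0^xf(t)\,dt$. *)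

theory Defs
  imports "HOL-Analysis.Analysis"
begin

text \<open>Partition of [0,1] into N intervals of length delta = 1/N.
  Cells are half-open [k/N,(k+1)/N), except the last one, which is closed.\<close>
definition ulam_cell :: "nat \<Rightarrow> nat \<Rightarrow> real set" where
  "ulam_cell N k = (if Suc k = N then {real k / real N .. 1}
                    else {real k / real N ..< real (Suc k) / real N})"

definition ulam_union :: "nat \<Rightarrow> nat set \<Rightarrow> real set" where
  "ulam_union N S = (\<Union>k\<in>S. ulam_cell N k)"

definition ulam_proj :: "nat \<Rightarrow> (real \<Rightarrow> real) \<Rightarrow> real \<Rightarrow> real" where
  "ulam_proj N g x = (\<Sum>k<N. indicator (ulam_cell N k) x *
        (real N * (LINT t:ulam_cell N k|lborel. g t)))"

definition var_sums :: "real set \<Rightarrow> (real \<Rightarrow> real) \<Rightarrow> real set" where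
  "var_sums I g = {\<Sum>i<n. \<bar>g (xs (Suc i)) - g (xs i)\<bar> | n xs.
        (\<forall>i\<le>n. xs i \<in> I) \<and> (\<forall>i<n. xs i < xs (Suc i))}"

definition var_on :: "real set \<Rightarrow> (real \<Rightarrow> real) \<Rightarrow> real" where
  "var_on I g = Sup (var_sums I g)"

definition bounded_var_on :: "real set \<Rightarrow> (real \<Rightarrow> real) \<Rightarrow> bool" where
  "bounded_var_on I g \<longleftrightarrow> bdd_above (var_sums I g)"

definition W_norm :: "(real \<Rightarrow> real) \<Rightarrow> real" where
  "W_norm f = (LINT x:{0..1}|lborel. \<bar>LINT t:{0..x}|lborel. f t\<bar>)"

end

theory Submission
  imports Defs
begin

(*
  Let V(x) be the variation of g on the part of a cell [a,b] left of x; then V + g and V - g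
  are increasing.  The defect g - \<pi>\<^sub>\<delta> g has mean zero on every cell, so its primitive F vanishes
  at the nodes and on [a,b] is the primitive of g minus its mean.  Comparing the averages of the
  increasing functions V \<plusminus> g over [a,x] and over [a,b] gives
    \<delta> |F x| \<le> (x - a) \<integral>\<^sub>a\<^sup>b V - \<delta> \<integral>\<^sub>a\<^sup>x V,
  which is at most (x - a) \<integral>\<^sub>a\<^sup>b V and at most (b - x) (\<delta> Var - \<integral>\<^sub>a\<^sup>b V).  Integrating the first
  bound over the left half of the cell and the second over the right half gives \<delta>\<^sup>2/8 times the
  variation of g on the cell; summing over the cells proves the estimate.
*)

lemma var_sums_mono: "I \<subseteq> J \<Longrightarrow> var_sums I g \<subseteq> var_sums J g"
  unfolding var_sums_def by (intro Collect_mono impI) blast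

lemma zero_in_var_sums: "I \<noteq> {} \<Longrightarrow> 0 \<in> var_sums I g"
  unfolding var_sums_def by (rule CollectI, rule exI[of _ 0]) auto

lemma var_sums_eq_0_on:
  assumes "I \<noteq> {}" and "\<forall>x\<in>I. g x = 0"
  shows "var_sums I g = {0}"
proof
  show "var_sums I g \<subseteq> {0}"
    unfolding var_sums_def using assms(2) by (auto intro!: sum.neutral)
  show "{0} \<subseteq> var_sums I g" using zero_in_var_sums[OF assms(1)] by simp
qed

lemma var_on_nonneg: "bdd_above (var_sums I g) \<Longrightarrow> I \<noteq> {} \<Longrightarrow> 0 \<le> var_on I g"
  unfolding var_on_def by (rule cSup_upper[OF zero_in_var_sums])

lemma var_on_mono:
  "bdd_above (var_sums I g) \<Longrightarrow> J \<subseteq> I \<Longrightarrow> J \<noteq> {} \<Longrightarrow> var_on J g \<le> var_on I g"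
  unfolding var_on_def using var_sums_mono[of J I g]
  by (intro cSup_subset_mono) (auto intro: zero_in_var_sums)

lemma abs_diff_le_var_on:
  assumes bdd: "bdd_above (var_sums I g)" and "x \<in> I" "y \<in> I"
  shows "\<bar>g y - g x\<bar> \<le> var_on I g"
proof -
  have "\<bar>g (max x y) - g (min x y)\<bar> \<in> var_sums I g" if "x \<noteq> y"
    unfolding var_sums_def
    by (rule CollectI, rule exI[of _ 1], rule exI[of _ "\<lambda>i. if i = 0 then min x y else max x y"])
       (use assms that in \<open>auto simp: min_def max_def\<close>)
  then have "x \<noteq> y \<Longrightarrow> \<bar>g y - g x\<bar> \<le> var_on I g"
    unfolding var_on_def using bdd by (cases "x \<le> y") (auto simp: abs_minus_commute intro: cSup_upper)
  then show ?thesis using var_on_nonneg[OF bdd] assms by (cases "x = y") auto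
qed

lemma increasing_chain_le:
  fixes xs :: "nat \<Rightarrow> real"
  assumes "\<forall>i<n. xs i < xs (Suc i)" "i \<le> n"
  shows "xs i \<le> xs n"
  using assms
proof (induction n)
  case (Suc n)
  then show ?case by (cases "i = Suc n") (auto intro: order.trans[OF _ less_imp_le])
qed simp

lemma var_sums_Int_atMost:
  fixes xs :: "nat \<Rightarrow> real"
  assumes "\<forall>i\<le>n. xs i \<in> I" "\<forall>i<n. xs i < xs (Suc i)" "xs n \<le> t"
  shows "(\<Sum>i<n. \<bar>g (xs (Suc i)) - g (xs i)\<bar>) \<in> var_sums (I \<inter> {..t}) g"
proof -
  have "\<forall>i\<le>n. xs i \<in> I \<inter> {..t}"
    using assms increasing_chain_le[OF assms(2)] by (meson IntI atMost_iff order_trans)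
  then show ?thesis unfolding var_sums_def using assms(2) by blast
qed

lemma increasing_chain_snoc:
  fixes xs :: "nat \<Rightarrow> real"
  assumes "\<forall>i\<le>n. xs i \<in> I" "\<forall>i<n. xs i < xs (Suc i)" "t \<in> I" "xs n < t"
  shows "\<forall>i\<le>Suc n. (xs(Suc n := t)) i \<in> I"
    and "\<forall>i<Suc n. (xs(Suc n := t)) i < (xs(Suc n := t)) (Suc i)"
    and "(\<Sum>i<Suc n. \<bar>g ((xs(Suc n := t)) (Suc i)) - g ((xs(Suc n := t)) i)\<bar>)
           = (\<Sum>i<n. \<bar>g (xs (Suc i)) - g (xs i)\<bar>) + \<bar>g t - g (xs n)\<bar>"
  using assms by (auto simp: le_Suc_eq less_Suc_eq intro!: sum.cong)

lemma var_on_Int_atMost_step: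
  assumes bdd: "bdd_above (var_sums I g)" and st: "s \<in> I" "t \<in> I" "s < t"
  shows "var_on (I \<inter> {..s}) g + \<bar>g t - g s\<bar> \<le> var_on (I \<inter> {..t}) g"
proof -
  have bdd_t: "bdd_above (var_sums (I \<inter> {..t}) g)"
    by (rule bdd_above_mono[OF bdd var_sums_mono]) auto
  have "\<sigma> + \<bar>g t - g s\<bar> \<le> var_on (I \<inter> {..t}) g" if "\<sigma> \<in> var_sums (I \<inter> {..s}) g" for \<sigma>
  proof -
    have "\<exists>n xs. \<sigma> = (\<Sum>i<n. \<bar>g (xs (Suc i)) - g (xs i)\<bar>) \<and>
        (\<forall>i\<le>n. xs i \<in> I \<inter> {..s}) \<and> (\<forall>i<n. xs i < xs (Suc i))"
      using that unfolding var_sums_def by (simp only: mem_Collect_eq)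
    then obtain n xs where \<sigma>: "\<sigma> = (\<Sum>i<n. \<bar>g (xs (Suc i)) - g (xs i)\<bar>)"
      and xs_in: "\<forall>i\<le>n. xs i \<in> I \<inter> {..s}" and xs_inc: "\<forall>i<n. xs i < xs (Suc i)"
      by blast
    then have xs_I: "\<forall>i\<le>n. xs i \<in> I" and "xs n \<le> s" by auto
    then consider (ends_at_s) "xs n = s" | (ends_before_s) "xs n < s" by linarith
    then show ?thesis
    proof cases
      case ends_at_s
      then have "xs n < t" using st by simp
      note ys = increasing_chain_snoc[OF xs_I xs_inc st(2) this]
      have "\<sigma> + \<bar>g t - g s\<bar> \<in> var_sums (I \<inter> {..t}) g"
        using var_sums_Int_atMost[OF ys(1,2), of t g] ys(3)[of g] ends_at_s st \<sigma> by simp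
      then show ?thesis unfolding var_on_def using bdd_t by (rule cSup_upper)
    next
      case ends_before_s
      \<comment> \<open>append s and then t; the extra term \<open>\<bar>g s - g (xs n)\<bar>\<close> only enlarges the sum\<close>
      note ys = increasing_chain_snoc[OF xs_I xs_inc st(1) ends_before_s]
      note zs = increasing_chain_snoc[OF ys(1,2) st(2)]
      have "\<sigma> + \<bar>g s - g (xs n)\<bar> + \<bar>g t - g s\<bar> \<in> var_sums (I \<inter> {..t}) g"
        using var_sums_Int_atMost[OF zs(1,2), of t g] zs(3)[of g] ys(3)[of g] st \<sigma> by simp
      then have "\<sigma> + \<bar>g s - g (xs n)\<bar> + \<bar>g t - g s\<bar> \<le> var_on (I \<inter> {..t}) g"
        unfolding var_on_def using bdd_t by (rule cSup_upper)
      then show ?thesis by simp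
    qed
  qed
  then have "var_on (I \<inter> {..s}) g \<le> var_on (I \<inter> {..t}) g - \<bar>g t - g s\<bar>"
    unfolding var_on_def[of "I \<inter> {..s}"] using zero_in_var_sums[of "I \<inter> {..s}" g] st
    by (intro cSup_least) (auto simp: algebra_simps)
  then show ?thesis by simp
qed

lemma mono_on_variation_plus_minus:
  assumes "bdd_above (var_sums I g)"
  shows "mono_on I (\<lambda>x. var_on (I \<inter> {..x}) g + g x)"
    and "mono_on I (\<lambda>x. var_on (I \<inter> {..x}) g - g x)"
proof -
  have step: "var_on (I \<inter> {..r}) g + \<bar>g s - g r\<bar> \<le> var_on (I \<inter> {..s}) g"
    if "r \<in> I" "s \<in> I" "r \<le> s" for r s
    using var_on_Int_atMost_step[OF assms that(1,2)] that(3) by (cases "r = s") auto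
  show "mono_on I (\<lambda>x. var_on (I \<inter> {..x}) g + g x)"
    by (rule mono_onI) (use step abs_ge_minus_self in \<open>smt (verit)\<close>)
  show "mono_on I (\<lambda>x. var_on (I \<inter> {..x}) g - g x)"
    by (rule mono_onI) (use step abs_ge_self in \<open>smt (verit)\<close>)
qed

lemma borel_measurable_bounded_var_on:
  assumes "bdd_above (var_sums I g)"
  shows "g \<in> borel_measurable (restrict_space borel I)"
proof -
  define V where "V x = var_on (I \<inter> {..x}) g" for x
  have "(\<lambda>x. ((V x + g x) - (V x - g x)) / 2) \<in> borel_measurable (restrict_space borel I)"
    using borel_measurable_mono_on_fnc[OF mono_on_variation_plus_minus(1)[OF assms]]
      borel_measurable_mono_on_fnc[OF mono_on_variation_plus_minus(2)[OF assms]]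
    unfolding V_def by measurable
  then show ?thesis by simp
qed

lemma integrable_on_mono_on_Ico:
  fixes p :: "real \<Rightarrow> real"
  assumes mono: "mono_on {a..<b} p" and bnd: "\<And>x. x \<in> {a..<b} \<Longrightarrow> p x \<le> C"
  shows "p integrable_on {a..b}"
proof -
  define p' where "p' x = (if x < b then p x else max C (p a))" for x
  have "mono_on {a..b} p'"
  proof (rule mono_onI)
    fix r s assume "r \<in> {a..b}" "s \<in> {a..b}" "r \<le> s"
    then show "p' r \<le> p' s"
      using mono bnd by (cases "s < b") (auto simp: p'_def intro: mono_onD)
  qed
  then have "p' integrable_on {a..b}" by (rule integrable_on_mono_on)
  then show ?thesis by (rule integrable_spike[where S="{b}"]) (auto simp: p'_def)
qed

lemma mono_on_integral_initial_segment_le: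
  fixes p :: "real \<Rightarrow> real"
  assumes mono: "mono_on {a..<b} p" and int: "p integrable_on {a..b}" and x: "a \<le> x" "x \<le> b"
  shows "(b - a) * integral {a..x} p \<le> (x - a) * integral {a..b} p"
proof (cases "x = b")
  case False
  then have xb: "x < b" using x by simp
  have int_ax: "p integrable_on {a..x}" and int_xb: "p integrable_on {x..b}"
    using int x by (auto intro: integrable_subinterval_real)
  have "integral {a..x} p \<le> integral {a..x} (\<lambda>_. p x)"
    by (rule integral_le[OF int_ax]) (use x xb mono in \<open>auto intro: mono_onD\<close>)
  then have left: "integral {a..x} p \<le> (x - a) * p x" using x by simp
  have "integral {x..b} (\<lambda>_. p x) \<le> integral {x..b} (\<lambda>t. if t = b then p x else p t)"
    by (rule integral_le[OF _ integrable_spike[OF int_xb, where S="{b}"]])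
       (use x xb mono in \<open>auto intro: mono_onD\<close>)
  also have "\<dots> = integral {x..b} p" by (rule integral_spike[where S="{b}"]) auto
  finally have right: "(b - x) * p x \<le> integral {x..b} p" using xb by simp
  have "(b - x) * integral {a..x} p \<le> (b - x) * ((x - a) * p x)"
    using left xb by (intro mult_left_mono) auto
  also have "\<dots> = (x - a) * ((b - x) * p x)" by simp
  also have "\<dots> \<le> (x - a) * integral {x..b} p"
    using right x by (intro mult_left_mono) auto
  finally have "(b - a) * integral {a..x} p \<le> (x - a) * (integral {a..x} p + integral {x..b} p)"
    by (simp add: algebra_simps)
  also have "integral {a..x} p + integral {x..b} p = integral {a..b} p"
    using x int by (intro Henstock_Kurzweil_Integration.integral_combine) auto
  finally show ?thesis .
qed simp

lemma abs_primitive_defect_le_variation: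
  fixes g V :: "real \<Rightarrow> real"
  assumes mono_plus: "mono_on {a..<b} (\<lambda>x. V x + g x)"
    and mono_minus: "mono_on {a..<b} (\<lambda>x. V x - g x)"
    and g: "g integrable_on {a..b}" and V: "V integrable_on {a..b}"
    and x: "a \<le> x" "x \<le> b"
  shows "\<bar>(b - a) * integral {a..x} g - (x - a) * integral {a..b} g\<bar>
           \<le> (x - a) * integral {a..b} V - (b - a) * integral {a..x} V"
proof -
  have gx: "g integrable_on {a..x}" "V integrable_on {a..x}"
    using g V x by (auto intro: integrable_subinterval_real)
  have "(b - a) * integral {a..x} (\<lambda>x. V x + g x) \<le> (x - a) * integral {a..b} (\<lambda>x. V x + g x)"
    by (rule mono_on_integral_initial_segment_le[OF mono_plus integrable_add[OF V g] x])
  moreover have "(b - a) * integral {a..x} (\<lambda>x. V x - g x) \<le> (x - a) * integral {a..b} (\<lambda>x. V x - g x)"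
    by (rule mono_on_integral_initial_segment_le[OF mono_minus integrable_diff[OF V g] x])
  ultimately show ?thesis
    using g V gx by (simp add: integral_add integral_diff algebra_simps)
qed

lemma integral_ramp_up:
  fixes a c C :: real
  assumes "a \<le> c"
  shows "integral {a..c} (\<lambda>x. (x - a) * C) = C * (c - a)^2 / 2"
proof -
  have "((\<lambda>x. (x - a) * C) has_integral ((\<lambda>x. C * (x - a)^2 / 2) c - (\<lambda>x. C * (x - a)^2 / 2) a)) {a..c}"
    by (rule fundamental_theorem_of_calculus[OF assms])
       (auto intro!: derivative_eq_intros simp: has_real_derivative_iff_has_vector_derivative[symmetric] field_simps)
  then show ?thesis by (intro integral_unique) simp
qed

lemma integral_ramp_down:
  fixes b c C :: real
  assumes "c \<le> b"
  shows "integral {c..b} (\<lambda>x. (b - x) * C) = C * (b - c)^2 / 2"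
proof -
  have "((\<lambda>x. (b - x) * C) has_integral ((\<lambda>x. - C * (b - x)^2 / 2) b - (\<lambda>x. - C * (b - x)^2 / 2) c)) {c..b}"
    by (rule fundamental_theorem_of_calculus[OF assms])
       (auto intro!: derivative_eq_intros simp: has_real_derivative_iff_has_vector_derivative[symmetric] field_simps)
  then show ?thesis by (intro integral_unique) simp
qed

lemma integral_le_tent:
  fixes h :: "real \<Rightarrow> real"
  assumes h: "h integrable_on {a..b}" and ab: "a \<le> b"
    and up: "\<And>x. x \<in> {a..b} \<Longrightarrow> h x \<le> (x - a) * P"
    and down: "\<And>x. x \<in> {a..b} \<Longrightarrow> h x \<le> (b - x) * Q"
  shows "integral {a..b} h \<le> (b - a)^2 / 8 * (P + Q)"
proof -
  define c where "c = (a + b) / 2"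
  have c: "a \<le> c" "c \<le> b" "c - a = (b - a) / 2" "b - c = (b - a) / 2"
    using ab by (auto simp: c_def field_simps)
  have "integral {a..c} h \<le> integral {a..c} (\<lambda>x. (x - a) * P)"
    by (rule integral_le[OF integrable_subinterval_real[OF h] integrable_continuous_interval])
       (use c up in \<open>auto intro!: continuous_intros\<close>)
  moreover have "integral {c..b} h \<le> integral {c..b} (\<lambda>x. (b - x) * Q)"
    by (rule integral_le[OF integrable_subinterval_real[OF h] integrable_continuous_interval])
       (use c down in \<open>auto intro!: continuous_intros\<close>)
  moreover have "integral {a..b} h = integral {a..c} h + integral {c..b} h"
    using c h by (intro Henstock_Kurzweil_Integration.integral_combine[symmetric]) auto
  ultimately have "integral {a..b} h \<le> P * (c - a)^2 / 2 + Q * (b - c)^2 / 2"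
    using integral_ramp_up[OF c(1), of P] integral_ramp_down[OF c(2), of Q] by linarith
  then show ?thesis
    unfolding c(3,4) by (simp add: power_divide field_simps)
qed

lemma integrable_on_of_mono_on_variation:
  fixes g V :: "real \<Rightarrow> real"
  assumes ab: "a < b"
    and mono_plus: "mono_on {a..<b} (\<lambda>x. V x + g x)"
    and mono_minus: "mono_on {a..<b} (\<lambda>x. V x - g x)"
    and V_nonneg: "\<And>x. x \<in> {a..b} \<Longrightarrow> 0 \<le> V x"
    and V_le: "\<And>x. x \<in> {a..b} \<Longrightarrow> V x \<le> K"
  shows "g integrable_on {a..b}" and "V integrable_on {a..b}"
proof -
  have g_le: "g x \<le> K + g a" and g_ge: "g a - K \<le> g x" if "x \<in> {a..<b}" for x
    using mono_onD[OF mono_minus, of a x] mono_onD[OF mono_plus, of a x]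
      that V_nonneg[of a] V_le[of x] ab by auto
  have plus: "(\<lambda>x. V x + g x) integrable_on {a..b}"
    by (rule integrable_on_mono_on_Ico[OF mono_plus, where C="2 * K + g a"]) (use g_le V_le in force)
  have minus: "(\<lambda>x. V x - g x) integrable_on {a..b}"
    by (rule integrable_on_mono_on_Ico[OF mono_minus, where C="2 * K - g a"]) (use g_ge V_le in force)
  show "g integrable_on {a..b}"
    using integrable_on_cmult_left[OF integrable_diff[OF plus minus], of "1/2"] by simp
  show "V integrable_on {a..b}"
    using integrable_on_cmult_left[OF integrable_add[OF plus minus], of "1/2"] by simp
qed

lemma abs_primitive_minus_mean_le:
  fixes g V :: "real \<Rightarrow> real"
  assumes ab: "a < b"
    and mono_plus: "mono_on {a..<b} (\<lambda>x. V x + g x)"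
    and mono_minus: "mono_on {a..<b} (\<lambda>x. V x - g x)"
    and g: "g integrable_on {a..b}" and V: "V integrable_on {a..b}"
    and V_nonneg: "\<And>x. x \<in> {a..b} \<Longrightarrow> 0 \<le> V x"
    and V_le: "\<And>x. x \<in> {a..b} \<Longrightarrow> V x \<le> K"
    and x: "x \<in> {a..b}"
  shows "(b - a) * \<bar>integral {a..x} (\<lambda>t. g t - integral {a..b} g / (b - a))\<bar>
           \<le> (x - a) * integral {a..b} V"
    and "(b - a) * \<bar>integral {a..x} (\<lambda>t. g t - integral {a..b} g / (b - a))\<bar>
           \<le> (b - x) * ((b - a) * K - integral {a..b} V)"
proof -
  define \<delta> where "\<delta> = b - a"
  define F where "F = integral {a..x} (\<lambda>t. g t - integral {a..b} g / \<delta>)"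
  have \<delta>: "\<delta> > 0" using ab by (simp add: \<delta>_def)
  have Vx: "V integrable_on {a..x}" "V integrable_on {x..b}"
    using V x by (auto intro: integrable_subinterval_real)
  have "F = integral {a..x} g - (x - a) * (integral {a..b} g / \<delta>)"
    unfolding F_def using x integrable_subinterval_real[OF g, of a x] by (subst integral_diff) auto
  then have "\<delta> * F = \<delta> * integral {a..x} g - (x - a) * integral {a..b} g"
    using \<delta> by (simp add: field_simps)
  then have "\<delta> * \<bar>F\<bar> = \<bar>\<delta> * integral {a..x} g - (x - a) * integral {a..b} g\<bar>"
    using \<delta> by (metis abs_mult abs_of_pos)
  also have "\<dots> \<le> (x - a) * integral {a..b} V - \<delta> * integral {a..x} V"
    unfolding \<delta>_def
    by (rule abs_primitive_defect_le_variation[OF mono_plus mono_minus g V]) (use x in auto)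
  finally have F_le: "\<delta> * \<bar>F\<bar> \<le> (x - a) * integral {a..b} V - \<delta> * integral {a..x} V" .
  have "0 \<le> integral {a..x} V"
    by (rule integral_nonneg[OF Vx(1)]) (use x V_nonneg in auto)
  then show "\<delta> * \<bar>F\<bar> \<le> (x - a) * integral {a..b} V"
    using F_le \<delta> by (smt (verit) mult_nonneg_nonneg)
  have "integral {x..b} V \<le> integral {x..b} (\<lambda>_. K)"
    by (rule integral_le[OF Vx(2)]) (use x V_le in auto)
  then have "\<delta> * integral {x..b} V \<le> \<delta> * ((b - x) * K)"
    using x \<delta> by (intro mult_left_mono) auto
  moreover have "integral {a..b} V = integral {a..x} V + integral {x..b} V"
    using x V by (intro Henstock_Kurzweil_Integration.integral_combine[symmetric]) auto
  then have "(x - a) * integral {a..b} V - \<delta> * integral {a..x} V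
      = \<delta> * integral {x..b} V - (b - x) * integral {a..b} V"
    unfolding \<delta>_def by (simp add: algebra_simps)
  ultimately show "\<delta> * \<bar>F\<bar> \<le> (b - x) * (\<delta> * K - integral {a..b} V)"
    using F_le by (simp add: algebra_simps)
qed

lemma integral_abs_primitive_minus_mean_le:
  fixes g V :: "real \<Rightarrow> real"
  assumes ab: "a < b"
    and mono_plus: "mono_on {a..<b} (\<lambda>x. V x + g x)"
    and mono_minus: "mono_on {a..<b} (\<lambda>x. V x - g x)"
    and V_nonneg: "\<And>x. x \<in> {a..b} \<Longrightarrow> 0 \<le> V x"
    and V_le: "\<And>x. x \<in> {a..b} \<Longrightarrow> V x \<le> K"
  shows "integral {a..b} (\<lambda>x. \<bar>integral {a..x} (\<lambda>t. g t - integral {a..b} g / (b - a))\<bar>)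
           \<le> (b - a)^2 / 8 * K"
proof -
  note integrable = integrable_on_of_mono_on_variation[OF assms]
  define JV where "JV = integral {a..b} V"
  define F where "F x = integral {a..x} (\<lambda>t. g t - integral {a..b} g / (b - a))" for x
  have "continuous_on {a..b} F"
    unfolding F_def by (intro indefinite_integral_continuous_1 integrable_diff integrable) auto
  then have "(\<lambda>x. \<bar>F x\<bar>) integrable_on {a..b}"
    by (intro integrable_continuous_interval continuous_intros)
  then have "integral {a..b} (\<lambda>x. \<bar>F x\<bar>)
      \<le> (b - a)^2 / 8 * (JV / (b - a) + ((b - a) * K - JV) / (b - a))"
  proof (rule integral_le_tent)
    fix x assume "x \<in> {a..b}"
    from abs_primitive_minus_mean_le[OF ab mono_plus mono_minus integrable V_nonneg V_le this] ab
    show "\<bar>F x\<bar> \<le> (x - a) * (JV / (b - a))"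
      and "\<bar>F x\<bar> \<le> (b - x) * (((b - a) * K - JV) / (b - a))"
      unfolding F_def JV_def times_divide_eq_right by (simp_all add: pos_le_divide_eq ac_simps)
  qed (use ab in auto)
  also have "\<dots> = (b - a)^2 / 8 * K" using ab by (simp flip: add_divide_distrib)
  finally show ?thesis unfolding F_def .
qed

lemma borel_measurable_zero_outside_bounded_var:
  fixes I :: "'i \<Rightarrow> real set"
  assumes "finite S" and zero: "\<forall>x. x \<notin> (\<Union>k\<in>S. I k) \<longrightarrow> g x = 0"
    and borel: "\<forall>k\<in>S. I k \<in> sets borel" and bv: "\<forall>k\<in>S. bdd_above (var_sums (I k) g)"
  shows "g \<in> borel_measurable borel"
proof (rule measurable_piecewise_restrict[where C="insert (- (\<Union>k\<in>S. I k)) (I ` S)"])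
  fix \<Omega> assume "\<Omega> \<in> insert (- (\<Union>k\<in>S. I k)) (I ` S)"
  then consider "\<Omega> = - (\<Union>k\<in>S. I k)" | k where "k \<in> S" "\<Omega> = I k" by blast
  then show "g \<in> borel_measurable (restrict_space borel \<Omega>)"
  proof cases
    case 1
    then show ?thesis using zero by (subst measurable_cong[where g="\<lambda>_. 0"]) (auto simp: space_restrict_space)
  qed (use bv borel_measurable_bounded_var_on in auto)
next
  fix \<Omega> assume "\<Omega> \<in> insert (- (\<Union>k\<in>S. I k)) (I ` S)"
  moreover have "- (\<Union>k\<in>S. I k) \<in> sets borel"
    using assms by (intro borel_comp sets.finite_UN) auto
  ultimately show "\<Omega> \<inter> space borel \<in> sets borel" using borel by auto
qed (use assms in \<open>auto intro: countable_finite\<close>)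

lemma bounded_zero_outside_bounded_var:
  fixes I :: "'i \<Rightarrow> real set"
  assumes "finite S" and zero: "\<forall>x. x \<notin> (\<Union>k\<in>S. I k) \<longrightarrow> g x = 0"
    and bv: "\<forall>k\<in>S. bdd_above (var_sums (I k) g)"
  obtains B where "\<And>x. \<bar>g x\<bar> \<le> B"
proof
  fix x
  define B where "B = (\<Sum>k\<in>S. \<bar>g (SOME y. y \<in> I k)\<bar> + \<bar>var_on (I k) g\<bar>)"
  show "\<bar>g x\<bar> \<le> B"
  proof (cases "x \<in> (\<Union>k\<in>S. I k)")
    case True
    then obtain k where k: "k \<in> S" "x \<in> I k" by blast
    from k(2) have "(SOME y. y \<in> I k) \<in> I k" by (rule someI)
    then have "\<bar>g x\<bar> \<le> \<bar>g (SOME y. y \<in> I k)\<bar> + \<bar>var_on (I k) g\<bar>"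
      using abs_diff_le_var_on[OF bv[rule_format, OF k(1)] _ k(2)] by fastforce
    also have "\<dots> \<le> B"
      unfolding B_def by (rule member_le_sum) (use k assms(1) in auto)
    finally show ?thesis .
  next
    case False
    then show ?thesis using zero by (auto simp: B_def intro: sum_nonneg)
  qed
qed

lemma set_integrable_bounded:
  fixes h :: "real \<Rightarrow> real"
  assumes h: "h \<in> borel_measurable borel" and B: "\<And>x. \<bar>h x\<bar> \<le> B"
    and A: "A \<in> sets borel" "A \<subseteq> {c..d}"
  shows "set_integrable lborel A h"
  unfolding set_integrable_def
proof (rule integrableI_bounded_set_indicator[where B=B])
  have "emeasure lborel A \<le> emeasure lborel {c..d}" using A by (intro emeasure_mono) auto
  then show "emeasure lborel A < \<infinity>" by (simp add: emeasure_lborel_Icc_eq order.strict_trans1)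
qed (use assms in auto)

lemma integrable_on_bounded:
  fixes h :: "real \<Rightarrow> real"
  assumes "h \<in> borel_measurable borel" and "\<And>x. \<bar>h x\<bar> \<le> B"
  shows "h integrable_on {c..d}"
  using set_borel_integral_eq_integral(1)[OF set_integrable_bounded[OF assms, of "{c..d}" c d]] by simp

definition ulam_node :: "nat \<Rightarrow> nat \<Rightarrow> real" where
  "ulam_node N k = real k / real N"

lemma ulam_node_Suc_diff: "ulam_node N (Suc k) - ulam_node N k = 1 / real N"
  by (simp add: ulam_node_def add_divide_distrib)

lemma ulam_node_less_Suc: "N > 0 \<Longrightarrow> ulam_node N k < ulam_node N (Suc k)"
  by (simp add: ulam_node_def divide_strict_right_mono)

lemma ulam_node_mono: "N > 0 \<Longrightarrow> j \<le> k \<Longrightarrow> ulam_node N j \<le> ulam_node N k"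
  by (simp add: ulam_node_def divide_right_mono)

lemma ulam_node_0 [simp]: "ulam_node N 0 = 0"
  by (simp add: ulam_node_def)

lemma ulam_node_self: "N > 0 \<Longrightarrow> ulam_node N N = 1"
  by (simp add: ulam_node_def)

lemma ulam_cell_eq:
  "N > 0 \<Longrightarrow> ulam_cell N k = (if Suc k = N then {ulam_node N k..ulam_node N (Suc k)}
                                  else {ulam_node N k..<ulam_node N (Suc k)})"
  by (simp add: ulam_cell_def ulam_node_def)

lemma ulam_cell_subset_Icc:
  "N > 0 \<Longrightarrow> ulam_cell N k \<subseteq> {ulam_node N k..ulam_node N (Suc k)}"
  by (auto simp: ulam_cell_eq)

lemma Ico_subset_ulam_cell:
  "N > 0 \<Longrightarrow> {ulam_node N k..<ulam_node N (Suc k)} \<subseteq> ulam_cell N k"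
  by (auto simp: ulam_cell_eq)

lemma ulam_node_in_cell: "N > 0 \<Longrightarrow> ulam_node N k \<in> ulam_cell N k"
  using subsetD[OF Ico_subset_ulam_cell[of N k], of "ulam_node N k"] ulam_node_less_Suc[of N k]
  by simp

lemma ulam_cell_disjoint:
  assumes N: "N > 0" and "j < N" "k < N" "j \<noteq> k"
  shows "ulam_cell N j \<inter> ulam_cell N k = {}"
proof -
  have *: "ulam_cell N j \<inter> ulam_cell N k = {}" if "j < k" "k < N" for j k
  proof -
    have "x < ulam_node N (Suc j)" if "x \<in> ulam_cell N j" for x
      using that \<open>j < k\<close> \<open>k < N\<close> N by (simp add: ulam_cell_eq split: if_splits)
    moreover have "ulam_node N (Suc j) \<le> ulam_node N k"
      using N \<open>j < k\<close> by (intro ulam_node_mono) auto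
    ultimately show ?thesis using ulam_cell_subset_Icc[OF N, of k] by fastforce
  qed
  show ?thesis using *[of j k] *[of k j] assms by (cases "j < k") auto
qed

lemma ulam_cell_borel [measurable]: "ulam_cell N k \<in> sets borel"
  by (simp add: ulam_cell_def)

lemma set_lebesgue_integral_ulam_cell:
  fixes g :: "real \<Rightarrow> real"
  assumes N: "N > 0" and g: "set_integrable lborel (ulam_cell N k) g"
  shows "(LINT t:ulam_cell N k|lborel. g t) = integral {ulam_node N k..ulam_node N (Suc k)} g"
proof -
  have "integral (ulam_cell N k) g = integral {ulam_node N k..ulam_node N (Suc k)} g"
  proof (rule integral_spike_set)
    have "{x \<in> ulam_cell N k - {ulam_node N k..ulam_node N (Suc k)}. g x \<noteq> 0} = {}"
      using ulam_cell_subset_Icc[OF N, of k] by blast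
    then show "negligible {x \<in> ulam_cell N k - {ulam_node N k..ulam_node N (Suc k)}. g x \<noteq> 0}"
      by (simp only: negligible_empty)
    have "{ulam_node N k..ulam_node N (Suc k)} - ulam_cell N k \<subseteq> {ulam_node N (Suc k)}"
      using Ico_subset_ulam_cell[OF N, of k] by fastforce
    then show "negligible {x \<in> {ulam_node N k..ulam_node N (Suc k)} - ulam_cell N k. g x \<noteq> 0}"
      by (intro negligible_subset[OF negligible_sing[of "ulam_node N (Suc k)"]]) blast
  qed
  then show ?thesis using set_borel_integral_eq_integral(2)[OF g] by simp
qed

lemma ulam_proj_on_cell:
  assumes N: "N > 0" and k: "k < N" and x: "x \<in> ulam_cell N k"
  shows "ulam_proj N g x = real N * (LINT t:ulam_cell N k|lborel. g t)"
proof -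
  have "ulam_proj N g x = (\<Sum>j\<in>{k}. indicator (ulam_cell N j) x * (real N * (LINT t:ulam_cell N j|lborel. g t)))"
    unfolding ulam_proj_def using ulam_cell_disjoint[OF N _ k] x k
    by (intro sum.mono_neutral_right) (auto simp: indicator_def)
  then show ?thesis using x by simp
qed

lemma ulam_proj_measurable_bounded:
  "ulam_proj N g \<in> borel_measurable borel"
  "\<bar>ulam_proj N g x\<bar> \<le> (\<Sum>k<N. \<bar>real N * (LINT t:ulam_cell N k|lborel. g t)\<bar>)"
proof -
  show "ulam_proj N g \<in> borel_measurable borel"
    unfolding ulam_proj_def by measurable
  have "\<bar>ulam_proj N g x\<bar> \<le> (\<Sum>k<N. \<bar>indicator (ulam_cell N k) x * (real N * (LINT t:ulam_cell N k|lborel. g t))\<bar>)"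
    unfolding ulam_proj_def by (rule sum_abs)
  also have "\<dots> \<le> (\<Sum>k<N. \<bar>real N * (LINT t:ulam_cell N k|lborel. g t)\<bar>)"
    by (rule sum_mono) (simp add: indicator_def)
  finally show "\<bar>ulam_proj N g x\<bar> \<le> (\<Sum>k<N. \<bar>real N * (LINT t:ulam_cell N k|lborel. g t)\<bar>)" .
qed

lemma integral_0_ulam_node:
  fixes h :: "real \<Rightarrow> real"
  assumes N: "N > 0" and h: "h integrable_on {0..1}" and n: "n \<le> N"
  shows "integral {0..ulam_node N n} h = (\<Sum>k<n. integral {ulam_node N k..ulam_node N (Suc k)} h)"
  using n
proof (induction n)
  case (Suc n)
  have "ulam_node N (Suc n) \<le> 1"
    using ulam_node_mono[OF N Suc.prems] ulam_node_self[OF N] by simp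
  then have "h integrable_on {0..ulam_node N (Suc n)}"
    by (intro integrable_subinterval_real[OF h]) auto
  then have "integral {0..ulam_node N (Suc n)} h
      = integral {0..ulam_node N n} h + integral {ulam_node N n..ulam_node N (Suc n)} h"
    using ulam_node_mono[OF N, of 0 n] ulam_node_less_Suc[OF N, of n]
    by (intro Henstock_Kurzweil_Integration.integral_combine[symmetric]) auto
  then show ?case using Suc by simp
qed simp

lemma var_sums_ulam_cell_off_support:
  assumes N: "N > 0" and "S \<subseteq> {..<N}" "k < N" "k \<notin> S"
    and zero: "\<forall>x. x \<notin> ulam_union N S \<longrightarrow> g x = 0"
  shows "var_sums (ulam_cell N k) g = {0}"
proof (rule var_sums_eq_0_on)
  show "ulam_cell N k \<noteq> {}" using ulam_node_in_cell[OF N] by blast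
  show "\<forall>x\<in>ulam_cell N k. g x = 0"
    using zero ulam_cell_disjoint[OF N, of _ k] assms(2-4) by (fastforce simp: ulam_union_def)
qed

lemma ulam_defect_measurable_bounded:
  assumes g: "g \<in> borel_measurable borel" and "\<And>x. \<bar>g x\<bar> \<le> B"
  shows "(\<lambda>x. g x - ulam_proj N g x) \<in> borel_measurable borel"
    and "\<bar>g x - ulam_proj N g x\<bar> \<le> B + (\<Sum>k<N. \<bar>real N * (LINT t:ulam_cell N k|lborel. g t)\<bar>)"
proof -
  show "(\<lambda>x. g x - ulam_proj N g x) \<in> borel_measurable borel"
    using g ulam_proj_measurable_bounded(1) by measurable
  show "\<bar>g x - ulam_proj N g x\<bar> \<le> B + (\<Sum>k<N. \<bar>real N * (LINT t:ulam_cell N k|lborel. g t)\<bar>)"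
    using abs_triangle_ineq4[of "g x" "ulam_proj N g x"] assms(2)[of x]
      ulam_proj_measurable_bounded(2)[of N g x] by linarith
qed

lemma ulam_proj_eq_mean:
  assumes N: "N > 0" and k: "k < N" and g: "g \<in> borel_measurable borel" "\<And>x. \<bar>g x\<bar> \<le> B"
    and x: "x \<in> ulam_cell N k"
  shows "ulam_proj N g x = integral {ulam_node N k..ulam_node N (Suc k)} g
                             / (ulam_node N (Suc k) - ulam_node N k)"
proof -
  have "set_integrable lborel (ulam_cell N k) g"
    by (rule set_integrable_bounded[OF g ulam_cell_borel ulam_cell_subset_Icc[OF N]])
  then show ?thesis
    using ulam_proj_on_cell[OF N k x] set_lebesgue_integral_ulam_cell[OF N]
    by (simp add: ulam_node_Suc_diff)
qed

lemma ulam_defect_primitive_on_cell: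
  assumes N: "N > 0" and k: "k < N" and g: "g \<in> borel_measurable borel" "\<And>x. \<bar>g x\<bar> \<le> B"
    and x: "x \<in> {ulam_node N k..ulam_node N (Suc k)}"
  shows "integral {0..x} (\<lambda>t. g t - ulam_proj N g t)
           = integral {ulam_node N k..x} (\<lambda>t. g t - integral {ulam_node N k..ulam_node N (Suc k)} g
                                                     / (ulam_node N (Suc k) - ulam_node N k))"
proof -
  define a where "a = ulam_node N"
  define f where "f = (\<lambda>t. g t - ulam_proj N g t)"
  define mean where "mean j = integral {a j..a (Suc j)} g / (a (Suc j) - a j)" for j
  have f_int: "f integrable_on {c..d}" for c d
    unfolding f_def by (rule integrable_on_bounded[OF ulam_defect_measurable_bounded[OF g]])
  have f_on_cell: "integral {a j..y} f = integral {a j..y} (\<lambda>t. g t - mean j)"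
    if "j < N" "y \<le> a (Suc j)" for j y
  proof (rule integral_spike[where S="{a (Suc j)}"])
    fix t assume "t \<in> {a j..y} - {a (Suc j)}"
    then have "t \<in> ulam_cell N j"
      using that(2) Ico_subset_ulam_cell[OF N, of j] by (auto simp: a_def)
    then show "g t - mean j = f t"
      using ulam_proj_eq_mean[OF N that(1) g] by (simp add: f_def mean_def a_def)
  qed auto
  have f_cell_0: "integral {a j..a (Suc j)} f = 0" if "j < N" for j
  proof -
    have "integral {a j..a (Suc j)} (\<lambda>t. g t - mean j)
        = integral {a j..a (Suc j)} g - (a (Suc j) - a j) * mean j"
      using ulam_node_less_Suc[OF N, of j] integrable_on_bounded[OF g]
      by (subst integral_diff) (auto simp: a_def)
    then show ?thesis
      using f_on_cell[OF that order_refl] ulam_node_less_Suc[OF N, of j] by (simp add: mean_def a_def)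
  qed
  have "integral {0..a k} f = 0"
    using integral_0_ulam_node[OF N f_int, of k] f_cell_0 k by (simp add: a_def)
  moreover have "integral {0..x} f = integral {0..a k} f + integral {a k..x} f"
    using x ulam_node_mono[OF N, of 0 k] f_int
    by (intro Henstock_Kurzweil_Integration.integral_combine[symmetric]) (auto simp: a_def)
  ultimately show ?thesis
    using f_on_cell[OF k] x by (simp add: mean_def a_def flip: f_def)
qed

lemma W_norm_eq_sum_ulam_cells:
  assumes N: "N > 0" and f: "f \<in> borel_measurable borel" "\<And>x. \<bar>f x\<bar> \<le> B"
  shows "W_norm f = (\<Sum>k<N. integral {ulam_node N k..ulam_node N (Suc k)}
                                (\<lambda>x. \<bar>integral {0..x} f\<bar>))"
proof -
  have "continuous_on {0..1} (\<lambda>x. \<bar>integral {0..x} f\<bar>)"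
    by (intro continuous_intros indefinite_integral_continuous_1 integrable_on_bounded[OF f])
  then have "(LINT x:{0..1}|lborel. \<bar>integral {0..x} f\<bar>) = integral {0..1} (\<lambda>x. \<bar>integral {0..x} f\<bar>)"
    and "(\<lambda>x. \<bar>integral {0..x} f\<bar>) integrable_on {0..1}"
    by (auto intro: set_borel_integral_eq_integral borel_integrable_atLeastAtMost'
                    integrable_continuous_interval)
  moreover have "(LINT t:{0..x}|lborel. f t) = integral {0..x} f" for x
    by (rule set_borel_integral_eq_integral(2)[OF set_integrable_bounded[OF f]]) auto
  ultimately show ?thesis
    unfolding W_norm_def using integral_0_ulam_node[OF N, of _ N] ulam_node_self[OF N] by simp
qed

lemma integral_abs_ulam_defect_primitive_on_cell_le:
  assumes N: "N > 0" and k: "k < N" and g: "g \<in> borel_measurable borel" "\<And>x. \<bar>g x\<bar> \<le> B"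
    and bv: "bdd_above (var_sums (ulam_cell N k) g)"
  shows "integral {ulam_node N k..ulam_node N (Suc k)}
           (\<lambda>x. \<bar>integral {0..x} (\<lambda>t. g t - ulam_proj N g t)\<bar>)
         \<le> (1 / real N)^2 / 8 * var_on (ulam_cell N k) g"
proof -
  define a where "a = ulam_node N k"
  define b where "b = ulam_node N (Suc k)"
  define V where "V x = var_on (ulam_cell N k \<inter> {..x}) g" for x
  have ab: "a < b" unfolding a_def b_def by (rule ulam_node_less_Suc[OF N])
  have Ico: "{a..<b} \<subseteq> ulam_cell N k"
    unfolding a_def b_def by (rule Ico_subset_ulam_cell[OF N])
  have a_in: "a \<in> ulam_cell N k \<inter> {..x}" if "a \<le> x" for x
    using that Ico ab by auto
  have V_bdd: "bdd_above (var_sums (ulam_cell N k \<inter> {..x}) g)" for x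
    by (rule bdd_above_mono[OF bv var_sums_mono]) auto
  have "integral {a..b} (\<lambda>x. \<bar>integral {0..x} (\<lambda>t. g t - ulam_proj N g t)\<bar>)
      = integral {a..b} (\<lambda>x. \<bar>integral {a..x} (\<lambda>t. g t - integral {a..b} g / (b - a))\<bar>)"
    unfolding a_def b_def by (intro integral_cong) (simp add: ulam_defect_primitive_on_cell[OF N k g])
  also have "\<dots> \<le> (b - a)^2 / 8 * var_on (ulam_cell N k) g"
  proof (rule integral_abs_primitive_minus_mean_le[where V=V, OF ab])
    show "mono_on {a..<b} (\<lambda>x. V x + g x)" "mono_on {a..<b} (\<lambda>x. V x - g x)"
      unfolding V_def using mono_on_variation_plus_minus[OF bv] Ico
      by (auto intro: mono_on_subset)
    show "0 \<le> V x" "V x \<le> var_on (ulam_cell N k) g" if "x \<in> {a..b}" for x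
      unfolding V_def using that a_in[of x]
      by (auto intro!: var_on_nonneg[OF V_bdd] var_on_mono[OF bv])
  qed
  finally show ?thesis by (simp add: a_def b_def ulam_node_Suc_diff)
qed

theorem lemma79:
  fixes N :: nat and S :: "nat set" and g :: "real \<Rightarrow> real"
  assumes "N > 0"
    and "S \<subseteq> {..<N}"
    and "\<forall>x. x \<notin> ulam_union N S \<longrightarrow> g x = 0"
    and "\<forall>k\<in>S. bounded_var_on (ulam_cell N k) g"
  shows "W_norm (\<lambda>x. g x - ulam_proj N g x)
           \<le> (1 / real N)^2 / 8 * (\<Sum>k\<in>S. var_on (ulam_cell N k) g)"
proof -
  have fin: "finite S" using assms(2) finite_subset by blast
  have zero: "\<forall>x. x \<notin> (\<Union>k\<in>S. ulam_cell N k) \<longrightarrow> g x = 0"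
    using assms(3) by (simp add: ulam_union_def)
  have bv_S: "\<forall>k\<in>S. bdd_above (var_sums (ulam_cell N k) g)"
    using assms(4) by (simp add: bounded_var_on_def)
  have bv: "bdd_above (var_sums (ulam_cell N k) g)" if "k < N" for k
    using bv_S var_sums_ulam_cell_off_support[OF assms(1,2) that _ assms(3)] by (cases "k \<in> S") auto
  have g_meas: "g \<in> borel_measurable borel"
    using borel_measurable_zero_outside_bounded_var[OF fin zero _ bv_S] by simp
  obtain B where g_bdd: "\<And>x. \<bar>g x\<bar> \<le> B"
    using bounded_zero_outside_bounded_var[OF fin zero bv_S] by blast
  have "W_norm (\<lambda>x. g x - ulam_proj N g x)
      = (\<Sum>k<N. integral {ulam_node N k..ulam_node N (Suc k)}
                  (\<lambda>x. \<bar>integral {0..x} (\<lambda>t. g t - ulam_proj N g t)\<bar>))"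
    by (rule W_norm_eq_sum_ulam_cells[OF assms(1) ulam_defect_measurable_bounded[OF g_meas g_bdd]])
  also have "\<dots> \<le> (\<Sum>k<N. (1 / real N)^2 / 8 * var_on (ulam_cell N k) g)"
    by (intro sum_mono integral_abs_ulam_defect_primitive_on_cell_le[OF assms(1) _ g_meas g_bdd bv])
       auto
  also have "\<dots> = (\<Sum>k\<in>S. (1 / real N)^2 / 8 * var_on (ulam_cell N k) g)"
    using assms(2) var_sums_ulam_cell_off_support[OF assms(1,2) _ _ assms(3)]
    by (intro sum.mono_neutral_right) (auto simp: var_on_def)
  finally show ?thesis by (simp add: sum_distrib_left)
qed

end
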